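(* Let $(X_n)_{n\ge 0}$ be a time-homogeneous Markov chain on a measurable state space $\Omega$, let $S\subset\Omega$ be a measurable set, let $\tau=\min\{n\ge 0: X_n\notin S\}$, and let $\nu$ be a quasistationary distribution (QSD) of the chain in $S$. Fix integers $N\ge 1$ and $T_{\rm poll}\ge 1$. Let $(X^1_n)_{n\ge0},\dots,(X^N_n)_{n\ge0}$ be $N$ independent copies of the Markov chain (same transition kernel) whose initial positions $X^1_0,\dots,X^N_0$ are i.i.d. with law exactly $\nu$, and let $\tau^j=\min\{n\ge0: X^j_n\notin S\}$. Define $$M=\min\{m\ge 1:\ \exists\, j\in\{1,\dots,N\}\text{ with } \tau^j\le mT_{\rm poll}\},\qquad K=\min\{j\in\{1,\dots,N\}:\ \tau^j\le MT_{\rm poll}\},$$ and $$X_{\rm acc}=X^K_{\tau^K},\qquad T_{\rm acc}=(N-1)(M-1)T_{\rm poll}+(K-1)T_{\rm poll}+\tau^K .$$ (That is, the replicas are run synchronously in blocks of $T_{\rm poll}$ steps until some replica leaves $S$ during a block; $K$ is the smallest index of a replica leaving $S$ during that block.) Then $(X_{\rm acc},T_{\rm acc})$ has the same law as $(X_\tau,\tau)$, where $(X_n)_{n\ge 0}$ is the Markov chain started from $X_0\sim\nu$.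
   Context: A probability measure $\nu$ with support in $S$ is a quasistationary distribution (QSD) in $S$ if for every measurable $A\subset S$ and every $n\in\mathbb N$, $\nu(A)=\mathbb P^\nu(X_n\in A\mid \tau>n)$, where $\mathbb P^\nu$ denotes the law of the chain started from $X_0\sim\nu$ and $\tau=\min\{n\ge0: X_n\notin S\}$ is the first exit time from $S$. *)

theory Defs
  imports "HOL-Probability.Probability"
begin

definition exit_time :: "'a set \<Rightarrow> (nat \<Rightarrow> 'a) \<Rightarrow> enat" where
  "exit_time S x = (if \<exists>n. x n \<notin> S then enat (LEAST n. x n \<notin> S) else \<infinity>)"

text \<open>A time-homogeneous Markov chain X on the probability space P with state space Omega
  and (probability) transition kernel kern: for every n, conditionally on the natural
  filtration at time n, X (n+1) has law kern (X n).  Written out on the generating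
  cylinder sets of that filtration.\<close>
definition markov_chain ::
  "'b measure \<Rightarrow> 'a measure \<Rightarrow> ('a \<Rightarrow> 'a measure) \<Rightarrow> (nat \<Rightarrow> 'b \<Rightarrow> 'a) \<Rightarrow> bool" where
  "markov_chain P \<Omega> kern X \<longleftrightarrow>
     prob_space P \<and> kern \<in> \<Omega> \<rightarrow>\<^sub>M prob_algebra \<Omega> \<and> (\<forall>n. X n \<in> P \<rightarrow>\<^sub>M \<Omega>) \<and>
     (\<forall>n A. (\<forall>i\<le>Suc n. A i \<in> sets \<Omega>) \<longrightarrow>
        measure P {\<omega>\<in>space P. \<forall>i\<le>Suc n. X i \<omega> \<in> A i} =
        (\<integral>\<omega>. indicator {\<omega>\<in>space P. \<forall>i\<le>n. X i \<omega> \<in> A i} \<omega> *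
               measure (kern (X n \<omega>)) (A (Suc n)) \<partial>P))"

text \<open>nu is a quasistationary distribution in S for the chain X (defined on Q, started
  from X 0 ~ nu, so that Q realizes the law P^nu).\<close>
definition qsd ::
  "'b measure \<Rightarrow> 'a measure \<Rightarrow> (nat \<Rightarrow> 'b \<Rightarrow> 'a) \<Rightarrow> 'a set \<Rightarrow> 'a measure \<Rightarrow> bool" where
  "qsd Q \<Omega> X S \<nu> \<longleftrightarrow>
     prob_space \<nu> \<and> sets \<nu> = sets \<Omega> \<and> S \<in> sets \<Omega> \<and> measure \<nu> S = 1 \<and>
     distr Q \<Omega> (X 0) = \<nu> \<and>
     (\<forall>A n. A \<in> sets \<Omega> \<longrightarrow> A \<subseteq> S \<longrightarrow>
        measure \<nu> A =
          measure Q {\<omega>\<in>space Q. X n \<omega> \<in> A \<and> exit_time S (\<lambda>k. X k \<omega>) > enat n}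
          / measure Q {\<omega>\<in>space Q. exit_time S (\<lambda>k. X k \<omega>) > enat n})"

text \<open>Polling index M and accepted replica index K, given the exit times taus of the
  replicas 1..N (only meaningful when some tau j is finite).\<close>
definition poll_M :: "nat \<Rightarrow> nat \<Rightarrow> (nat \<Rightarrow> enat) \<Rightarrow> nat" where
  "poll_M N Tpoll taus = (LEAST m. m \<ge> 1 \<and> (\<exists>j\<in>{1..N}. taus j \<le> enat (m * Tpoll)))"

definition poll_K :: "nat \<Rightarrow> nat \<Rightarrow> (nat \<Rightarrow> enat) \<Rightarrow> nat" where
  "poll_K N Tpoll taus = (LEAST j. j \<in> {1..N} \<and> taus j \<le> enat (poll_M N Tpoll taus * Tpoll))"

definition T_acc :: "nat \<Rightarrow> nat \<Rightarrow> (nat \<Rightarrow> enat) \<Rightarrow> nat" where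
  "T_acc N Tpoll taus =
     (let M = poll_M N Tpoll taus; K = poll_K N Tpoll taus in
      (N - 1) * (M - 1) * Tpoll + (K - 1) * Tpoll + the_enat (taus K))"

definition X_acc :: "nat \<Rightarrow> nat \<Rightarrow> (nat \<Rightarrow> enat) \<Rightarrow> (nat \<Rightarrow> nat \<Rightarrow> 'a) \<Rightarrow> 'a" where
  "X_acc N Tpoll taus xs = (let K = poll_K N Tpoll taus in xs K (the_enat (taus K)))"

end

theory Submission
  imports Defs
begin

text \<open>
  Started from the quasistationary distribution \<open>\<nu>\<close>, the chain forgets how long it has survived:
  conditionally on \<open>\<tau> > a\<close> the position \<open>X\<^sub>a\<close> has law \<open>\<nu>\<close> again, so by the Markov property
  \<open>P(\<tau> > a, (X\<^sub>a\<^sub>+\<^sub>i)\<^sub>i \<in> C) = P(\<tau> > a) P((X\<^sub>i)\<^sub>i \<in> C)\<close> for every cylinder \<open>C\<close>. Hence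
  \<open>P(\<tau> > a + b) = P(\<tau> > a) P(\<tau> > b)\<close> and \<open>P(\<tau> = a + r, X\<^sub>\<tau> \<in> B) = P(\<tau> > a) P(\<tau> = r, X\<^sub>\<tau> \<in> B)\<close>.

  Every \<open>t \<ge> 1\<close> is uniquely of the form \<open>t = N(m-1)T + (k-1)T + r\<close> with \<open>m \<ge> 1\<close>,
  \<open>1 \<le> k \<le> N\<close> and \<open>1 \<le> r \<le> T\<close>. As the replicas start in \<open>S\<close> almost surely, the event
  \<open>X\<^sub>a\<^sub>c\<^sub>c \<in> B, T\<^sub>a\<^sub>c\<^sub>c = t\<close> is almost surely the intersection of the independent events
  \<open>\<tau>\<^sup>j > mT\<close> for \<open>j < k\<close>, \<open>\<tau>\<^sup>j > (m-1)T\<close> for \<open>j > k\<close>, and \<open>\<tau>\<^sup>k = (m-1)T + r, X\<^sup>k \<in> B\<close>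
  at that time. By the multiplicativity above, the product of their probabilities is
  \<open>P(\<tau> = t, X\<^sub>\<tau> \<in> B)\<close>.
\<close>

section \<open>Path cylinders of Markov chains\<close>

definition path_cylinder :: "'b measure \<Rightarrow> (nat \<Rightarrow> 'b \<Rightarrow> 'a) \<Rightarrow> nat \<Rightarrow> (nat \<Rightarrow> 'a set) \<Rightarrow> 'b set"
  where "path_cylinder P X n A = {\<omega>\<in>space P. \<forall>i\<le>n. X i \<omega> \<in> A i}"

lemma path_cylinder_cong: "(\<And>i. i \<le> n \<Longrightarrow> A i = B i) \<Longrightarrow> path_cylinder P X n A = path_cylinder P X n B"
  unfolding path_cylinder_def by auto

lemma sets_path_cylinder:
  assumes "\<And>i. X i \<in> P \<rightarrow>\<^sub>M \<Omega>" and "\<And>i. A i \<in> sets \<Omega>"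
  shows "path_cylinder P X n A \<in> sets P"
  using assms unfolding path_cylinder_def by measurable

lemma markov_chainD:
  assumes "markov_chain P \<Omega> kern X"
  shows "prob_space P" and "kern \<in> \<Omega> \<rightarrow>\<^sub>M prob_algebra \<Omega>" and "X n \<in> P \<rightarrow>\<^sub>M \<Omega>"
    and "(\<And>i. A i \<in> sets \<Omega>) \<Longrightarrow> measure P (path_cylinder P X (Suc n) A)
           = (\<integral>\<omega>. indicator (path_cylinder P X n A) \<omega> * measure (kern (X n \<omega>)) (A (Suc n)) \<partial>P)"
  using assms unfolding markov_chain_def path_cylinder_def by auto

lemma markov_chain_kernel:
  assumes "markov_chain P \<Omega> kern X" and "x \<in> space \<Omega>"
  shows "prob_space (kern x)" and "sets (kern x) = sets \<Omega>"
  using measurable_space[OF markov_chainD(2)[OF assms(1)] assms(2)]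
  by (auto simp: space_prob_algebra)

lemma nn_integral_indicator_comp_eq:
  assumes Y[measurable]: "Y \<in> P \<rightarrow>\<^sub>M M" and I[measurable]: "I \<in> sets P"
    and sets_\<mu>: "sets \<mu> = sets M"
    and emeasure_eq: "\<And>D. D \<in> sets M \<Longrightarrow> emeasure P (I \<inter> Y -` D) = emeasure \<mu> D"
    and h[measurable]: "h \<in> borel_measurable M"
  shows "(\<integral>\<^sup>+\<omega>. indicator I \<omega> * h (Y \<omega>) \<partial>P) = integral\<^sup>N \<mu> h"
proof -
  have "distr (density P (indicator I)) M Y = \<mu>"
  proof (rule measure_eqI)
    fix D assume "D \<in> sets (distr (density P (indicator I)) M Y)"
    then have D[measurable]: "D \<in> sets M" by simp
    have "I \<inter> (Y -` D \<inter> space P) = I \<inter> Y -` D"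
      using sets.sets_into_space[OF I] by blast
    then show "emeasure (distr (density P (indicator I)) M Y) D = emeasure \<mu> D"
      by (simp add: emeasure_distr emeasure_restricted emeasure_eq)
  qed (simp add: sets_\<mu>)
  then show ?thesis
    by (auto simp: nn_integral_distr nn_integral_density)
qed

lemma markov_chain_emeasure_step:
  assumes mc: "markov_chain P \<Omega> kern X" and A: "\<And>i. A i \<in> sets \<Omega>" and D: "D \<in> sets \<Omega>"
  shows "emeasure P (path_cylinder P X n A \<inter> X (Suc n) -` D)
    = (\<integral>\<^sup>+\<omega>. indicator (path_cylinder P X n A) \<omega> * emeasure (kern (X n \<omega>)) D \<partial>P)"
proof -
  interpret prob_space P using markov_chainD(1)[OF mc] .
  note X[measurable] = markov_chainD(3)[OF mc]
  note kern[measurable] = markov_chainD(2)[OF mc] and [measurable] = D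
  define I where "I = path_cylinder P X n A"
  let ?f = "\<lambda>\<omega>. indicator I \<omega> * measure (kern (X n \<omega>)) D"
  have I[measurable]: "I \<in> sets P"
    unfolding I_def using X A by (rule sets_path_cylinder)
  have "I \<inter> X (Suc n) -` D = path_cylinder P X (Suc n) (A(Suc n := D))"
    using sets.sets_into_space[OF I] by (auto simp: I_def path_cylinder_def le_Suc_eq)
  then have "emeasure P (I \<inter> X (Suc n) -` D) = ennreal (integral\<^sup>L P ?f)"
    using markov_chainD(4)[OF mc, of "A(Suc n := D)" n] A D
    by (simp add: emeasure_eq_measure I_def path_cylinder_cong[of n "A(Suc n := D)" A])
  also have "\<dots> = (\<integral>\<^sup>+\<omega>. ?f \<omega> \<partial>P)"
    using markov_chain_kernel(1)[OF mc] measurable_space[OF X]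
    by (intro nn_integral_eq_integral[symmetric] integrable_const_bound[where B=1])
       (auto simp: indicator_def prob_space.prob_le_1)
  also have "\<dots> = (\<integral>\<^sup>+\<omega>. indicator I \<omega> * emeasure (kern (X n \<omega>)) D \<partial>P)"
  proof (intro nn_integral_cong)
    fix \<omega> assume "\<omega> \<in> space P"
    then interpret K: prob_space "kern (X n \<omega>)"
      using markov_chain_kernel(1)[OF mc] measurable_space[OF X] by auto
    show "ennreal (?f \<omega>) = indicator I \<omega> * emeasure (kern (X n \<omega>)) D"
      by (simp add: ennreal_mult' K.emeasure_eq_measure split: split_indicator)
  qed
  finally show ?thesis
    by (simp add: I_def)
qed

lemma markov_chain_nn_integral_step:
  assumes mc: "markov_chain P \<Omega> kern X" and A: "\<And>i. A i \<in> sets \<Omega>"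
    and h[measurable]: "h \<in> borel_measurable \<Omega>"
  shows "(\<integral>\<^sup>+\<omega>. indicator (path_cylinder P X n A) \<omega> * h (X (Suc n) \<omega>) \<partial>P)
       = (\<integral>\<^sup>+\<omega>. indicator (path_cylinder P X n A) \<omega> * (\<integral>\<^sup>+y. h y \<partial>kern (X n \<omega>)) \<partial>P)"
proof -
  interpret prob_space P using markov_chainD(1)[OF mc] .
  note X[measurable] = markov_chainD(3)[OF mc]
  define I where "I = path_cylinder P X n A"
  have I[measurable]: "I \<in> sets P"
    unfolding I_def using X A by (rule sets_path_cylinder)
  have [measurable]: "(\<lambda>\<omega>. kern (X n \<omega>)) \<in> P \<rightarrow>\<^sub>M subprob_algebra \<Omega>"
    using measurable_prob_algebraD[OF markov_chainD(2)[OF mc]] by measurable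
  define \<mu> where "\<mu> = density P (indicator I) \<bind> (\<lambda>\<omega>. kern (X n \<omega>))"
  have sets_\<mu>: "sets \<mu> = sets \<Omega>"
    unfolding \<mu>_def using markov_chain_kernel(2)[OF mc] measurable_space[OF X] not_empty
    by (subst sets_bind) auto
  have integral_\<mu>: "integral\<^sup>N \<mu> g = (\<integral>\<^sup>+\<omega>. indicator I \<omega> * (\<integral>\<^sup>+y. g y \<partial>kern (X n \<omega>)) \<partial>P)"
    if [measurable]: "g \<in> borel_measurable \<Omega>" for g
    unfolding \<mu>_def
    by (subst nn_integral_bind[where B=\<Omega>]) (auto simp: nn_integral_density)
  have "emeasure P (I \<inter> X (Suc n) -` D) = emeasure \<mu> D" if D: "D \<in> sets \<Omega>" for D
  proof -
    have "(\<integral>\<^sup>+\<omega>. indicator I \<omega> * emeasure (kern (X n \<omega>)) D \<partial>P)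
        = (\<integral>\<^sup>+\<omega>. indicator I \<omega> * (\<integral>\<^sup>+y. indicator D y \<partial>kern (X n \<omega>)) \<partial>P)"
      using markov_chain_kernel(2)[OF mc] measurable_space[OF X] D
      by (intro nn_integral_cong) simp
    then show ?thesis
      using markov_chain_emeasure_step[OF mc A D] integral_\<mu>[of "indicator D"] sets_\<mu> D
      by (simp add: I_def)
  qed
  with nn_integral_indicator_comp_eq[OF X I sets_\<mu> _ h] integral_\<mu>[OF h] show ?thesis
    by (simp add: I_def)
qed

lemma markov_chain_subprob_kernel:
  "markov_chain P \<Omega> kern X \<Longrightarrow> kern \<in> \<Omega> \<rightarrow>\<^sub>M subprob_algebra \<Omega>"
  using markov_chainD(2) measurable_prob_algebraD by blast

definition killed_step :: "('a \<Rightarrow> 'a measure) \<Rightarrow> 'a set \<Rightarrow> ('a \<Rightarrow> ennreal) \<Rightarrow> 'a \<Rightarrow> ennreal"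
  where "killed_step kern C f x = (\<integral>\<^sup>+y. indicator C y * f y \<partial>kern x)"

text \<open>\<open>killed_steps kern A k f x\<close> is the expectation of \<open>f (X k)\<close> on the event
  \<open>X 1 \<in> A 1, \<dots>, X k \<in> A k\<close> for the chain started at \<open>x\<close>.\<close>

primrec killed_steps ::
  "('a \<Rightarrow> 'a measure) \<Rightarrow> (nat \<Rightarrow> 'a set) \<Rightarrow> nat \<Rightarrow> ('a \<Rightarrow> ennreal) \<Rightarrow> 'a \<Rightarrow> ennreal"
where
  "killed_steps kern A 0 f = f"
| "killed_steps kern A (Suc k) f = killed_steps kern A k (killed_step kern (A (Suc k)) f)"

lemma measurable_killed_step:
  assumes "kern \<in> \<Omega> \<rightarrow>\<^sub>M subprob_algebra \<Omega>" and [measurable]: "C \<in> sets \<Omega>"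
    and [measurable]: "f \<in> borel_measurable \<Omega>"
  shows "killed_step kern C f \<in> borel_measurable \<Omega>"
  unfolding killed_step_def
  by (rule measurable_compose[OF assms(1) nn_integral_measurable_subprob_algebra]) measurable

lemma measurable_killed_steps:
  assumes "kern \<in> \<Omega> \<rightarrow>\<^sub>M subprob_algebra \<Omega>" and "\<And>i. A i \<in> sets \<Omega>"
  shows "f \<in> borel_measurable \<Omega> \<Longrightarrow> killed_steps kern A k f \<in> borel_measurable \<Omega>"
  by (induction k arbitrary: f) (auto intro: measurable_killed_step[OF assms])

definition cylinder_integral ::
  "'b measure \<Rightarrow> (nat \<Rightarrow> 'b \<Rightarrow> 'a) \<Rightarrow> nat \<Rightarrow> (nat \<Rightarrow> 'a set) \<Rightarrow> ('a \<Rightarrow> ennreal) \<Rightarrow> ennreal"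
  where "cylinder_integral P X n A f = (\<integral>\<^sup>+\<omega>. indicator (path_cylinder P X n A) \<omega> * f (X n \<omega>) \<partial>P)"

lemma cylinder_integral_Suc:
  assumes mc: "markov_chain P \<Omega> kern X" and A: "\<And>i. A i \<in> sets \<Omega>"
    and f[measurable]: "f \<in> borel_measurable \<Omega>"
  shows "cylinder_integral P X (Suc n) A f = cylinder_integral P X n A (killed_step kern (A (Suc n)) f)"
proof -
  have [measurable]: "A (Suc n) \<in> sets \<Omega>" using A .
  have "\<And>\<omega>. indicator (path_cylinder P X (Suc n) A) \<omega> * f (X (Suc n) \<omega>) =
     indicator (path_cylinder P X n A) \<omega> * (indicator (A (Suc n)) (X (Suc n) \<omega>) * f (X (Suc n) \<omega>))"
    unfolding path_cylinder_def by (auto simp: le_Suc_eq split: split_indicator)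
  moreover have "(\<lambda>y. indicator (A (Suc n)) y * f y) \<in> borel_measurable \<Omega>"
    by measurable
  note markov_chain_nn_integral_step[where A=A, OF mc A this, of n]
  ultimately show ?thesis
    unfolding cylinder_integral_def killed_step_def by simp
qed

lemma cylinder_integral_add:
  assumes mc: "markov_chain P \<Omega> kern X" and A: "\<And>i. A i \<in> sets \<Omega>"
  shows "f \<in> borel_measurable \<Omega> \<Longrightarrow>
    cylinder_integral P X (l + k) A f = cylinder_integral P X l A (killed_steps kern (\<lambda>i. A (l + i)) k f)"
proof (induction k arbitrary: f)
  case (Suc k)
  have "killed_step kern (A (Suc (l + k))) f \<in> borel_measurable \<Omega>"
    using measurable_killed_step[OF markov_chain_subprob_kernel[OF mc] A Suc.prems] .
  with Suc show ?case
    by (simp add: cylinder_integral_Suc[OF mc A])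
qed simp

lemma cylinder_integral_0:
  assumes mc: "markov_chain P \<Omega> kern X" and A: "\<And>i. A i \<in> sets \<Omega>"
    and [measurable]: "f \<in> borel_measurable \<Omega>"
  shows "cylinder_integral P X 0 A f = (\<integral>\<^sup>+x. indicator (A 0) x * f x \<partial>distr P \<Omega> (X 0))"
proof -
  note [measurable] = markov_chainD(3)[OF mc] A
  show ?thesis
    unfolding cylinder_integral_def path_cylinder_def
    by (subst nn_integral_distr) (auto intro!: nn_integral_cong split: split_indicator)
qed

lemma measure_path_cylinder_eq_cylinder_integral:
  assumes mc: "markov_chain P \<Omega> kern X" and A: "\<And>i. A i \<in> sets \<Omega>"
  shows "ennreal (measure P (path_cylinder P X n A)) = cylinder_integral P X n A (\<lambda>_. 1)"
proof -
  interpret prob_space P using markov_chainD(1)[OF mc] .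
  show ?thesis
    using sets_path_cylinder[OF markov_chainD(3)[OF mc] A]
    by (simp add: cylinder_integral_def emeasure_eq_measure)
qed

lemma markov_chain_measure_path_cylinder:
  assumes mc: "markov_chain P \<Omega> kern X" and A: "\<And>i. A i \<in> sets \<Omega>"
  shows "ennreal (measure P (path_cylinder P X n A))
    = (\<integral>\<^sup>+x. indicator (A 0) x * killed_steps kern A n (\<lambda>_. 1) x \<partial>distr P \<Omega> (X 0))"
proof -
  have "ennreal (measure P (path_cylinder P X n A)) = cylinder_integral P X (0 + n) A (\<lambda>_. 1)"
    by (simp add: measure_path_cylinder_eq_cylinder_integral[OF mc A])
  also have "\<dots> = cylinder_integral P X 0 A (killed_steps kern A n (\<lambda>_. 1))"
    by (subst cylinder_integral_add[OF mc A]) simp_all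
  also have "\<dots> = (\<integral>\<^sup>+x. indicator (A 0) x * killed_steps kern A n (\<lambda>_. 1) x \<partial>distr P \<Omega> (X 0))"
    by (intro cylinder_integral_0[OF mc A] measurable_killed_steps[OF markov_chain_subprob_kernel[OF mc] A])
       simp
  finally show ?thesis .
qed

lemma markov_chain_measure_path_cylinder_eq:
  assumes mc: "markov_chain P \<Omega> kern X" and mc': "markov_chain P' \<Omega> kern X'"
    and init: "distr P \<Omega> (X 0) = distr P' \<Omega> (X' 0)" and A: "\<And>i. A i \<in> sets \<Omega>"
  shows "measure P (path_cylinder P X n A) = measure P' (path_cylinder P' X' n A)"
proof -
  have "ennreal (measure P (path_cylinder P X n A)) = ennreal (measure P' (path_cylinder P' X' n A))"
    using markov_chain_measure_path_cylinder[where A=A, OF mc A]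
      markov_chain_measure_path_cylinder[where A=A, OF mc' A]
    by (simp add: init)
  then show ?thesis
    by simp
qed

section \<open>Exit times\<close>

lemma exit_time_eq_enat_iff: "exit_time S x = enat t \<longleftrightarrow> (\<forall>i<t. x i \<in> S) \<and> x t \<notin> S"
proof
  assume exit: "exit_time S x = enat t"
  then have ex: "\<exists>m. x m \<notin> S"
    by (auto simp: exit_time_def split: if_splits)
  with exit have t: "t = (LEAST m. x m \<notin> S)"
    by (simp add: exit_time_def)
  show "(\<forall>i<t. x i \<in> S) \<and> x t \<notin> S"
    unfolding t using LeastI_ex[OF ex] not_less_Least[of _ "\<lambda>m. x m \<notin> S"] by blast
next
  assume t: "(\<forall>i<t. x i \<in> S) \<and> x t \<notin> S"
  then have "(LEAST m. x m \<notin> S) = t"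
    by (intro Least_equality) (auto simp: not_less[symmetric])
  with t show "exit_time S x = enat t"
    by (auto simp: exit_time_def)
qed

lemma enat_less_exit_time_iff: "enat n < exit_time S x \<longleftrightarrow> (\<forall>i\<le>n. x i \<in> S)"
proof (cases "exit_time S x")
  case (enat e)
  then have "(\<forall>i<e. x i \<in> S) \<and> x e \<notin> S"
    by (simp add: exit_time_eq_enat_iff)
  with enat show ?thesis
    by (auto simp: not_le[symmetric])
next
  case infinity
  then show ?thesis
    by (auto simp: exit_time_def split: if_splits)
qed

lemma path_cylinder_survival:
  "path_cylinder P X n (\<lambda>_. S) = {\<omega>\<in>space P. enat n < exit_time S (\<lambda>k. X k \<omega>)}"
  by (auto simp: path_cylinder_def enat_less_exit_time_iff)

definition exit_pattern :: "'a set \<Rightarrow> 'a set \<Rightarrow> nat \<Rightarrow> nat \<Rightarrow> 'a set"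
  where "exit_pattern S B r = (\<lambda>i. if i < r then S else B - S)"

lemma sets_exit_pattern: "S \<in> sets M \<Longrightarrow> B \<in> sets M \<Longrightarrow> exit_pattern S B r i \<in> sets M"
  by (auto simp: exit_pattern_def)

lemma path_cylinder_exit_pattern:
  "path_cylinder P X r (exit_pattern S B r)
     = {\<omega>\<in>space P. exit_time S (\<lambda>n. X n \<omega>) = enat r \<and> X r \<omega> \<in> B}"
  by (auto simp: path_cylinder_def exit_pattern_def exit_time_eq_enat_iff le_less)

section \<open>Chains started from a quasistationary distribution\<close>

locale qsd_chain =
  fixes Q :: "'b measure" and \<Omega> :: "'a measure" and kern X S \<nu>
  assumes chain: "markov_chain Q \<Omega> kern X" and qsd: "qsd Q \<Omega> X S \<nu>"
begin

text \<open>\<open>survival n = P(\<tau> > n)\<close> and \<open>exit_prob B r = P(\<tau> = r, X\<^sub>r \<in> B)\<close>.\<close>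

abbreviation survival :: "nat \<Rightarrow> real"
  where "survival n \<equiv> measure Q (path_cylinder Q X n (\<lambda>_. S))"

abbreviation exit_prob :: "'a set \<Rightarrow> nat \<Rightarrow> real"
  where "exit_prob B r \<equiv> measure Q (path_cylinder Q X r (exit_pattern S B r))"

lemma S[measurable]: "S \<in> sets \<Omega>"
  using qsd by (simp add: qsd_def)

lemma nu: "prob_space \<nu>" "sets \<nu> = sets \<Omega>" "measure \<nu> S = 1" "distr Q \<Omega> (X 0) = \<nu>"
  using qsd by (simp_all add: qsd_def)

lemma X[measurable]: "X n \<in> Q \<rightarrow>\<^sub>M \<Omega>"
  using markov_chainD(3)[OF chain] .

lemma AE_nu_in_S: "AE x in \<nu>. x \<in> S"
  using prob_space.AE_prob_1[OF nu(1)] nu(3) .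

text \<open>The QSD property with the denominator cleared; its case \<open>A = S\<close> shows \<open>survival n \<noteq> 0\<close>.\<close>

lemma measure_survival_Int_vimage:
  assumes A: "A \<in> sets \<Omega>"
  shows "measure Q (path_cylinder Q X n (\<lambda>_. S) \<inter> X n -` A) = measure \<nu> A * survival n"
proof -
  have conditional: "measure \<nu> A' = measure Q (path_cylinder Q X n (\<lambda>_. S) \<inter> X n -` A') / survival n"
    if "A' \<in> sets \<Omega>" "A' \<subseteq> S" for A'
  proof -
    have "{\<omega>\<in>space Q. X n \<omega> \<in> A' \<and> enat n < exit_time S (\<lambda>k. X k \<omega>)}
        = path_cylinder Q X n (\<lambda>_. S) \<inter> X n -` A'"
      by (auto simp: path_cylinder_survival)
    moreover have "measure \<nu> A' = measure Q {\<omega>\<in>space Q. X n \<omega> \<in> A' \<and> enat n < exit_time S (\<lambda>k. X k \<omega>)}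
        / measure Q {\<omega>\<in>space Q. enat n < exit_time S (\<lambda>k. X k \<omega>)}"
      using qsd that by (simp add: qsd_def)
    ultimately show ?thesis
      by (simp add: path_cylinder_survival)
  qed
  have "path_cylinder Q X n (\<lambda>_. S) \<inter> X n -` S = path_cylinder Q X n (\<lambda>_. S)"
    by (auto simp: path_cylinder_def)
  then have "survival n \<noteq> 0"
    using conditional[of S] nu(3) by auto
  moreover have "measure \<nu> (A \<inter> S) = measure \<nu> A"
    using AE_nu_in_S A nu(2) by (intro measure_eq_AE) auto
  moreover have "path_cylinder Q X n (\<lambda>_. S) \<inter> X n -` (A \<inter> S) = path_cylinder Q X n (\<lambda>_. S) \<inter> X n -` A"
    by (auto simp: path_cylinder_def)
  ultimately show ?thesis
    using conditional[of "A \<inter> S"] A by (simp add: divide_eq_eq)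
qed

lemma survival_0: "survival 0 = 1"
proof -
  have "path_cylinder Q X 0 (\<lambda>_. S) = X 0 -` S \<inter> space Q"
    by (auto simp: path_cylinder_def)
  then show ?thesis
    using nu(3) by (simp add: nu(4)[symmetric] measure_distr)
qed

lemma cylinder_integral_survival:
  assumes g: "g \<in> borel_measurable \<Omega>"
  shows "cylinder_integral Q X n (\<lambda>_. S) g = ennreal (survival n) * integral\<^sup>N \<nu> g"
proof -
  interpret prob_space Q using markov_chainD(1)[OF chain] .
  interpret \<nu>: prob_space \<nu> using nu(1) .
  have "cylinder_integral Q X n (\<lambda>_. S) g = integral\<^sup>N (scale_measure (survival n) \<nu>) g"
    unfolding cylinder_integral_def
  proof (rule nn_integral_indicator_comp_eq[OF X _ _ _ g])
    show "path_cylinder Q X n (\<lambda>_. S) \<in> sets Q"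
      by (rule sets_path_cylinder[OF X]) simp
    show "sets (scale_measure (survival n) \<nu>) = sets \<Omega>"
      using nu(2) by simp
    fix D assume "D \<in> sets \<Omega>"
    then show "emeasure Q (path_cylinder Q X n (\<lambda>_. S) \<inter> X n -` D) = emeasure (scale_measure (survival n) \<nu>) D"
      using measure_survival_Int_vimage[of D n]
      by (simp add: emeasure_eq_measure \<nu>.emeasure_eq_measure ennreal_mult' mult.commute)
  qed
  also have "\<dots> = ennreal (survival n) * integral\<^sup>N \<nu> g"
    using g by (intro nn_integral_scale_measure) (simp add: measurable_cong_sets[OF nu(2) refl])
  finally show ?thesis .
qed

lemma measure_path_cylinder_shift:
  assumes A: "\<And>i. A i \<in> sets \<Omega>" and AS: "\<And>i. i \<le> n \<Longrightarrow> A i = S"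
  shows "measure Q (path_cylinder Q X (n + k) A)
    = survival n * measure Q (path_cylinder Q X k (\<lambda>i. A (n + i)))"
proof -
  define A' where "A' = (\<lambda>i. A (n + i))"
  have A': "\<And>i. A' i \<in> sets \<Omega>"
    using A by (simp add: A'_def)
  define g where "g = killed_steps kern A' k (\<lambda>_. 1)"
  have g: "g \<in> borel_measurable \<Omega>"
    unfolding g_def by (rule measurable_killed_steps[OF markov_chain_subprob_kernel[OF chain] A']) simp
  have cylinder_S: "cylinder_integral Q X l A f = cylinder_integral Q X l (\<lambda>_. S) f"
    if "\<And>i. i \<le> l \<Longrightarrow> A i = S" for A l f
    using that by (simp add: cylinder_integral_def path_cylinder_cong[of l A "\<lambda>_. S"])
  have "ennreal (measure Q (path_cylinder Q X (n + k) A)) = cylinder_integral Q X n A g"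
    using cylinder_integral_add[where A=A, OF chain A, of "\<lambda>_. 1" n k]
    by (simp add: measure_path_cylinder_eq_cylinder_integral[where A=A, OF chain A] g_def A'_def)
  also have "\<dots> = ennreal (survival n) * integral\<^sup>N \<nu> g"
    by (simp add: cylinder_S AS cylinder_integral_survival[OF g])
  also have "integral\<^sup>N \<nu> g = ennreal (measure Q (path_cylinder Q X k A'))"
  proof -
    have "ennreal (measure Q (path_cylinder Q X k A')) = cylinder_integral Q X (0 + k) A' (\<lambda>_. 1)"
      by (simp add: measure_path_cylinder_eq_cylinder_integral[where A=A', OF chain A'])
    also have "\<dots> = cylinder_integral Q X 0 A' g"
      unfolding g_def by (subst cylinder_integral_add[where A=A', OF chain A']) simp_all
    also have "\<dots> = integral\<^sup>N \<nu> g"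
      using AS[of n] cylinder_S[of 0 A'] by (simp add: A'_def cylinder_integral_survival[OF g] survival_0)
    finally show ?thesis ..
  qed
  finally show ?thesis
    by (simp add: A'_def ennreal_mult'[symmetric])
qed

lemma survival_add: "survival (a + b) = survival a * survival b"
  using measure_path_cylinder_shift[of "\<lambda>_. S" a b] by simp

lemma prod_survival: "finite J \<Longrightarrow> (\<Prod>j\<in>J. survival (d j)) = survival (\<Sum>j\<in>J. d j)"
  by (induction J rule: finite_induct) (simp_all add: survival_0 survival_add)

lemma exit_prob_add:
  assumes B: "B \<in> sets \<Omega>" and "1 \<le> r"
  shows "exit_prob B (a + r) = survival a * exit_prob B r"
proof -
  have "(\<lambda>i. exit_pattern S B (a + r) (a + i)) = exit_pattern S B r"
    by (auto simp: exit_pattern_def)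
  moreover have "exit_pattern S B (a + r) i = S" if "i \<le> a" for i
    using that \<open>1 \<le> r\<close> by (simp add: exit_pattern_def)
  ultimately show ?thesis
    using measure_path_cylinder_shift[of "exit_pattern S B (a + r)" a r] sets_exit_pattern[OF S B]
    by simp
qed

lemma prod_survival_exit_prob:
  assumes "finite J" "k \<in> J" "B \<in> sets \<Omega>" "1 \<le> r"
  shows "(\<Prod>j\<in>J. if j = k then exit_prob B (d j + r) else survival (d j))
    = exit_prob B ((\<Sum>j\<in>J. d j) + r)"
proof -
  have "(\<Prod>j\<in>J - {k}. if j = k then exit_prob B (d j + r) else survival (d j))
      = (\<Prod>j\<in>J - {k}. survival (d j))"
    by (intro prod.cong) auto
  then have "(\<Prod>j\<in>J. if j = k then exit_prob B (d j + r) else survival (d j))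
      = exit_prob B (d k + r) * (\<Prod>j\<in>J - {k}. survival (d j))"
    using assms(1,2) by (simp add: prod.remove)
  also have "\<dots> = exit_prob B ((d k + (\<Sum>j\<in>J - {k}. d j)) + r)"
    using assms by (simp add: exit_prob_add prod_survival survival_add add.assoc)
  finally show ?thesis
    using assms(1,2) by (simp add: sum.remove)
qed

lemma exit_prob_0:
  assumes "B \<in> sets \<Omega>"
  shows "exit_prob B 0 = 0"
proof -
  have "path_cylinder Q X 0 (exit_pattern S B 0) = X 0 -` (B - S) \<inter> space Q"
    by (auto simp: path_cylinder_def exit_pattern_def)
  then have "exit_prob B 0 = measure \<nu> (B - S)"
    using assms by (simp add: nu(4)[symmetric] measure_distr)
  also have "\<dots> = measure \<nu> {}"
    using AE_nu_in_S assms nu(2) by (intro measure_eq_AE) auto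
  finally show ?thesis
    by simp
qed

end

section \<open>The polling scheme\<close>

text \<open>\<open>poll_outcome N T taus m k s\<close> says \<open>(M, K, \<tau>\<^sup>K) = (m, k, s)\<close> without using \<open>LEAST\<close>.\<close>

definition poll_outcome :: "nat \<Rightarrow> nat \<Rightarrow> (nat \<Rightarrow> enat) \<Rightarrow> nat \<Rightarrow> nat \<Rightarrow> nat \<Rightarrow> bool" where
  "poll_outcome N T taus m k s \<longleftrightarrow> 1 \<le> m \<and> k \<in> {1..N} \<and> taus k = enat s \<and> s \<le> m * T \<and>
     (\<forall>j\<in>{1..N}. j < k \<longrightarrow> enat (m * T) < taus j) \<and>
     (2 \<le> m \<longrightarrow> (\<forall>j\<in>{1..N}. enat ((m - 1) * T) < taus j))"

lemma poll_outcome_of_poll: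
  fixes taus :: "nat \<Rightarrow> enat"
  assumes T: "1 \<le> T" and fin: "\<exists>j\<in>{1..N}. taus j < \<infinity>"
  shows "poll_outcome N T taus (poll_M N T taus) (poll_K N T taus) (the_enat (taus (poll_K N T taus)))"
proof -
  define m where "m = poll_M N T taus"
  define k where "k = poll_K N T taus"
  obtain j0 where j0: "j0 \<in> {1..N}" "taus j0 < \<infinity>"
    using fin by blast
  then obtain a where "taus j0 = enat a"
    using less_infinityE by blast
  moreover have "a \<le> Suc a * T"
    using T by (simp add: trans_le_add2)
  ultimately have "1 \<le> Suc a \<and> (\<exists>j\<in>{1..N}. taus j \<le> enat (Suc a * T))"
    using j0(1) by (intro conjI bexI[of _ j0]) auto
  then have m: "1 \<le> m \<and> (\<exists>j\<in>{1..N}. taus j \<le> enat (m * T))"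
    unfolding m_def poll_M_def by (rule LeastI)
  then obtain j1 where j1: "j1 \<in> {1..N} \<and> taus j1 \<le> enat (m * T)"
    by blast
  have k: "k \<in> {1..N} \<and> taus k \<le> enat (m * T)"
    unfolding k_def poll_K_def m_def[symmetric]
    by (rule LeastI[where P="\<lambda>j. j \<in> {1..N} \<and> taus j \<le> enat (m * T)", OF j1])
  then obtain s where s: "taus k = enat s" "s \<le> m * T"
    using enat_ile by fastforce
  have before_k: "enat (m * T) < taus j" if "j \<in> {1..N}" "j < k" for j
  proof -
    have "\<not> (j \<in> {1..N} \<and> taus j \<le> enat (m * T))"
      using not_less_Least[OF that(2)[unfolded k_def poll_K_def]] unfolding m_def .
    then show ?thesis
      using that(1) by (simp add: not_le)
  qed
  have before_m: "enat ((m - 1) * T) < taus j" if "2 \<le> m" "j \<in> {1..N}" for j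
  proof -
    have "m - 1 < m"
      using that(1) by simp
    then have "\<not> (1 \<le> m - 1 \<and> (\<exists>j\<in>{1..N}. taus j \<le> enat ((m - 1) * T)))"
      unfolding m_def poll_M_def by (rule not_less_Least)
    then show ?thesis
      using that by (simp add: not_le)
  qed
  have "the_enat (taus k) = s"
    using s by simp
  then show ?thesis
    unfolding poll_outcome_def m_def[symmetric] k_def[symmetric]
    using m k s before_k before_m by blast
qed

lemma poll_M_K_of_poll_outcome:
  fixes taus :: "nat \<Rightarrow> enat"
  assumes "poll_outcome N T taus m k s"
  shows "poll_M N T taus = m" and "poll_K N T taus = k"
proof -
  have tk: "taus k \<le> enat (m * T)" and k: "k \<in> {1..N}" and "1 \<le> m"
    using assms by (auto simp: poll_outcome_def)
  show M: "poll_M N T taus = m"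
    unfolding poll_M_def
  proof (rule Least_equality)
    show "1 \<le> m \<and> (\<exists>j\<in>{1..N}. taus j \<le> enat (m * T))"
      using \<open>1 \<le> m\<close> k tk by blast
    fix m' assume m': "1 \<le> m' \<and> (\<exists>j\<in>{1..N}. taus j \<le> enat (m' * T))"
    show "m \<le> m'"
    proof (rule ccontr)
      assume "\<not> m \<le> m'"
      then have "2 \<le> m" and "m' * T \<le> (m - 1) * T"
        using m' by auto
      obtain j where "j \<in> {1..N}" and "taus j \<le> enat (m' * T)"
        using m' by blast
      moreover have "enat ((m - 1) * T) < taus j"
        using assms \<open>2 \<le> m\<close> \<open>j \<in> {1..N}\<close> by (auto simp: poll_outcome_def)
      ultimately show False
        using \<open>m' * T \<le> (m - 1) * T\<close> by (metis enat_ord_simps(1) leD order.trans)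
    qed
  qed
  show "poll_K N T taus = k"
    unfolding poll_K_def M
  proof (rule Least_equality)
    show "k \<in> {1..N} \<and> taus k \<le> enat (m * T)"
      using k tk by blast
    fix j assume j: "j \<in> {1..N} \<and> taus j \<le> enat (m * T)"
    show "k \<le> j"
    proof (rule ccontr)
      assume "\<not> k \<le> j"
      with assms j have "enat (m * T) < taus j"
        unfolding poll_outcome_def by auto
      with j show False
        using leD by blast
    qed
  qed
qed

lemma accepted_iff_poll_outcome:
  fixes taus :: "nat \<Rightarrow> enat"
  assumes "1 \<le> T"
  shows "(\<exists>j\<in>{1..N}. taus j < \<infinity>) \<and> X_acc N T taus xs \<in> B \<and> T_acc N T taus = t \<longleftrightarrow>
    (\<exists>m k s. poll_outcome N T taus m k s \<and> xs k s \<in> B \<and> (N - 1) * (m - 1) * T + (k - 1) * T + s = t)"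
proof
  assume accepted: "(\<exists>j\<in>{1..N}. taus j < \<infinity>) \<and> X_acc N T taus xs \<in> B \<and> T_acc N T taus = t"
  let ?m = "poll_M N T taus" and ?k = "poll_K N T taus"
  have "poll_outcome N T taus ?m ?k (the_enat (taus ?k))"
    using poll_outcome_of_poll[OF assms] accepted by blast
  moreover have "xs ?k (the_enat (taus ?k)) \<in> B"
    and "(N - 1) * (?m - 1) * T + (?k - 1) * T + the_enat (taus ?k) = t"
    using accepted by (simp_all add: X_acc_def T_acc_def Let_def)
  ultimately show "\<exists>m k s. poll_outcome N T taus m k s \<and> xs k s \<in> B \<and>
      (N - 1) * (m - 1) * T + (k - 1) * T + s = t"
    by blast
next
  assume "\<exists>m k s. poll_outcome N T taus m k s \<and> xs k s \<in> B \<and> (N - 1) * (m - 1) * T + (k - 1) * T + s = t"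
  then obtain m k s where outcome: "poll_outcome N T taus m k s" and "xs k s \<in> B"
    and "(N - 1) * (m - 1) * T + (k - 1) * T + s = t"
    by blast
  moreover have "k \<in> {1..N}" "taus k = enat s"
    using outcome by (simp_all add: poll_outcome_def)
  ultimately show "(\<exists>j\<in>{1..N}. taus j < \<infinity>) \<and> X_acc N T taus xs \<in> B \<and> T_acc N T taus = t"
    using poll_M_K_of_poll_outcome[OF outcome] by (auto simp: X_acc_def T_acc_def Let_def)
qed

lemma polling_time_unique:
  fixes N T :: nat
  assumes "1 \<le> m" "k \<in> {1..N}" "1 \<le> r" "r \<le> T" and "1 \<le> m'" "k' \<in> {1..N}" "1 \<le> r'" "r' \<le> T"
    and eq: "N * (m - 1) * T + (k - 1) * T + r = N * (m' - 1) * T + (k' - 1) * T + r'"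
  shows "m = m' \<and> k = k' \<and> r = r'"
proof -
  have decode: "((N * a + b) * T + c) div T div N = a" "((N * a + b) * T + c) div T mod N = b"
    "((N * a + b) * T + c) mod T = c" if "b < N" "c < T" for a b c
    using that by simp_all
  obtain a b c a' b' c' where "m = Suc a" "k = Suc b" "r = Suc c" "m' = Suc a'" "k' = Suc b'" "r' = Suc c'"
    using assms(1-8) by (metis Suc_le_D atLeastAtMost_iff One_nat_def)
  moreover from this eq have "(N * a + b) * T + c = (N * a' + b') * T + c'"
    by (simp add: algebra_simps)
  ultimately show ?thesis
    using decode[of b c a] decode[of b' c' a'] assms(2,4,6,8) by (metis Suc_le_eq atLeastAtMost_iff)
qed

lemma polling_time_decompose:
  fixes N T t :: nat
  assumes "1 \<le> N" "1 \<le> T" "1 \<le> t"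
  obtains m k r where "1 \<le> m" "k \<in> {1..N}" "1 \<le> r" "r \<le> T" "t = N * (m - 1) * T + (k - 1) * T + r"
proof
  let ?q = "(t - 1) div T"
  have "t = ?q * T + (t - 1) mod T + 1" "?q = N * (?q div N) + ?q mod N"
    using assms div_mult_mod_eq[of "t - 1" T] div_mult_mod_eq[of ?q N] by (simp_all add: algebra_simps)
  then show "t = N * ((?q div N + 1) - 1) * T + ((?q mod N + 1) - 1) * T + ((t - 1) mod T + 1)"
    by (metis add_diff_cancel_right' add.assoc distrib_right)
qed (use assms in \<open>auto simp: Suc_le_eq\<close>)

lemma sum_poll_offsets:
  fixes N T m k :: nat
  assumes "1 \<le> m" "k \<in> {1..N}"
  shows "(\<Sum>j\<in>{1..N}. if j < k then m * T else (m - 1) * T) = N * (m - 1) * T + (k - 1) * T"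
proof -
  have "(\<Sum>j\<in>{1..N}. if j < k then m * T else (m - 1) * T) = (\<Sum>j\<in>{1..N}. (m - 1) * T + (if j < k then T else 0))"
    using assms(1) by (intro sum.cong) (auto simp: algebra_simps dest: le_Suc_ex)
  also have "\<dots> = N * (m - 1) * T + card ({1..N} \<inter> {j. j < k}) * T"
    by (simp add: sum.distrib sum.If_cases)
  also have "{1..N} \<inter> {j. j < k} = {1..<k}"
    using assms(2) by auto
  finally show ?thesis
    by simp
qed

text \<open>Positivity of the exit times matters: if \<open>\<tau>\<^sup>K = 0\<close> were possible, different outcomes
  \<open>(m, k, s)\<close> could give the same \<open>T\<^sub>a\<^sub>c\<^sub>c\<close>.\<close>

lemma accepted_iff_replica_pattern:
  fixes taus :: "nat \<Rightarrow> enat"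
  assumes T: "1 \<le> T" and pos: "\<forall>j\<in>{1..N}. 0 < taus j"
    and m: "1 \<le> m" and k: "k \<in> {1..N}" and r: "1 \<le> r" "r \<le> T"
    and t: "t = N * (m - 1) * T + (k - 1) * T + r"
  shows "(\<exists>j\<in>{1..N}. taus j < \<infinity>) \<and> X_acc N T taus xs \<in> B \<and> T_acc N T taus = t \<longleftrightarrow>
    (\<forall>j\<in>{1..N}. if j = k then taus j = enat ((m - 1) * T + r) \<and> xs j ((m - 1) * T + r) \<in> B
                 else enat (if j < k then m * T else (m - 1) * T) < taus j)"
    (is "?accepted \<longleftrightarrow> ?pattern")
proof -
  have N: "(N - 1) * a + a = N * a" for a :: nat
    using k by (cases N) auto
  have "?accepted \<longleftrightarrow> (\<exists>m' k' s. poll_outcome N T taus m' k' s \<and> xs k' s \<in> B \<and>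
      (N - 1) * (m' - 1) * T + (k' - 1) * T + s = t)"
    by (rule accepted_iff_poll_outcome[OF T])
  also have "\<dots> \<longleftrightarrow> poll_outcome N T taus m k ((m - 1) * T + r) \<and> xs k ((m - 1) * T + r) \<in> B"
  proof
    assume "\<exists>m' k' s. poll_outcome N T taus m' k' s \<and> xs k' s \<in> B \<and>
      (N - 1) * (m' - 1) * T + (k' - 1) * T + s = t"
    then obtain m' k' s where outcome: "poll_outcome N T taus m' k' s" and "xs k' s \<in> B"
      and t': "(N - 1) * (m' - 1) * T + (k' - 1) * T + s = t"
      by blast
    then have m': "1 \<le> m'" and k': "k' \<in> {1..N}" and "taus k' = enat s" and "s \<le> m' * T"
      by (auto simp: poll_outcome_def)
    have "(m' - 1) * T < s"
    proof (cases "2 \<le> m'")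
      case True
      with outcome k' have "enat ((m' - 1) * T) < taus k'"
        unfolding poll_outcome_def by blast
      with \<open>taus k' = enat s\<close> show ?thesis
        by simp
    next
      case False
      from pos k' have "0 < taus k'"
        by blast
      with False m' \<open>taus k' = enat s\<close> show ?thesis
        by (simp add: zero_enat_def)
    qed
    define r' where "r' = s - (m' - 1) * T"
    have "(m' - 1) * T + T = m' * T"
      using m' by (cases m') auto
    then have r': "1 \<le> r'" "r' \<le> T" "s = (m' - 1) * T + r'"
      using \<open>(m' - 1) * T < s\<close> \<open>s \<le> m' * T\<close> unfolding r'_def by linarith+
    have "t = N * (m' - 1) * T + (k' - 1) * T + r'"
      using t' r'(3) N[of "(m' - 1) * T"] by (simp add: mult.assoc)
    then have "m' = m \<and> k' = k \<and> r' = r"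
      by (intro polling_time_unique[OF m' k' r'(1,2) m k r]) (simp add: t)
    with outcome \<open>xs k' s \<in> B\<close> r'(3) show "poll_outcome N T taus m k ((m - 1) * T + r) \<and> xs k ((m - 1) * T + r) \<in> B"
      by simp
  next
    assume "poll_outcome N T taus m k ((m - 1) * T + r) \<and> xs k ((m - 1) * T + r) \<in> B"
    moreover have "(N - 1) * (m - 1) * T + (k - 1) * T + ((m - 1) * T + r) = t"
      using t N[of "(m - 1) * T"] by (simp add: mult.assoc)
    ultimately show "\<exists>m' k' s. poll_outcome N T taus m' k' s \<and> xs k' s \<in> B \<and>
      (N - 1) * (m' - 1) * T + (k' - 1) * T + s = t"
      by (intro exI[of _ m] exI[of _ k] exI[of _ "(m - 1) * T + r"]) simp
  qed
  also have "\<dots> \<longleftrightarrow> ?pattern"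
  proof
    assume outcome: "poll_outcome N T taus m k ((m - 1) * T + r) \<and> xs k ((m - 1) * T + r) \<in> B"
    show ?pattern
    proof
      fix j assume j: "j \<in> {1..N}"
      have "enat ((m - 1) * T) < taus j"
      proof (cases "2 \<le> m")
        case True
        with outcome j show ?thesis
          unfolding poll_outcome_def by blast
      next
        case False
        with m pos j show ?thesis
          by (simp add: zero_enat_def)
      qed
      with outcome j show "if j = k then taus j = enat ((m - 1) * T + r) \<and> xs j ((m - 1) * T + r) \<in> B
        else enat (if j < k then m * T else (m - 1) * T) < taus j"
        unfolding poll_outcome_def by auto
    qed
  next
    assume pattern: ?pattern
    have at_k: "taus k = enat ((m - 1) * T + r)" "xs k ((m - 1) * T + r) \<in> B"
      using bspec[OF pattern k] by simp_all
    have before_k: "enat (m * T) < taus j" if "j \<in> {1..N}" "j < k" for j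
      using bspec[OF pattern that(1)] that(2) by simp
    have "enat ((m - 1) * T) < taus j" if "j \<in> {1..N}" for j
    proof (cases j k rule: linorder_cases)
      case less
      have "enat ((m - 1) * T) \<le> enat (m * T)"
        by (simp add: mult_le_mono1)
      from this before_k[OF that less] show ?thesis
        by (rule le_less_trans)
    next
      case equal
      with at_k r show ?thesis
        by simp
    next
      case greater
      with bspec[OF pattern that] show ?thesis
        by simp
    qed
    moreover have "(m - 1) * T + r \<le> m * T"
      using m r by (cases m) auto
    ultimately show "poll_outcome N T taus m k ((m - 1) * T + r) \<and> xs k ((m - 1) * T + r) \<in> B"
      unfolding poll_outcome_def using m k at_k before_k by blast
  qed
  finally show ?thesis .
qed

section \<open>Independent replicas\<close>

lemma (in prob_space) indep_vars_measure_INT_path_cylinder: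
  assumes indep: "indep_vars (\<lambda>_. Pi\<^sub>M UNIV (\<lambda>_. \<Omega>)) (\<lambda>j \<omega> n. Xs j n \<omega>) J"
    and J: "finite J" "J \<noteq> {}"
    and Xs: "\<And>j n. j \<in> J \<Longrightarrow> Xs j n \<in> M \<rightarrow>\<^sub>M \<Omega>" and A: "\<And>j i. j \<in> J \<Longrightarrow> A j i \<in> sets \<Omega>"
  shows "prob (\<Inter>j\<in>J. path_cylinder M (Xs j) (c j) (A j)) = (\<Prod>j\<in>J. prob (path_cylinder M (Xs j) (c j) (A j)))"
proof (rule indep_setsD[OF indep[unfolded indep_vars_def2, THEN conjunct2] order_refl J(2,1)])
  show "\<forall>j\<in>J. path_cylinder M (Xs j) (c j) (A j)
      \<in> {(\<lambda>\<omega> n. Xs j n \<omega>) -` D \<inter> space M |D. D \<in> sets (Pi\<^sub>M UNIV (\<lambda>_. \<Omega>))}"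
  proof
    fix j assume j: "j \<in> J"
    note [measurable] = A[OF j]
    let ?D = "{x\<in>space (Pi\<^sub>M UNIV (\<lambda>_. \<Omega>)). \<forall>i\<le>c j. x i \<in> A j i}"
    have "(\<lambda>\<omega> n. Xs j n \<omega>) -` ?D \<inter> space M = path_cylinder M (Xs j) (c j) (A j)"
      using measurable_space[OF Xs[OF j]] by (auto simp: path_cylinder_def space_PiM)
    moreover have "?D \<in> sets (Pi\<^sub>M UNIV (\<lambda>_. \<Omega>))"
      by measurable
    ultimately show "path_cylinder M (Xs j) (c j) (A j)
        \<in> {(\<lambda>\<omega> n. Xs j n \<omega>) -` D \<inter> space M |D. D \<in> sets (Pi\<^sub>M UNIV (\<lambda>_. \<Omega>))}"
      by blast
  qed
qed

locale qsd_replicas = qsd_chain Q \<Omega> kern X S \<nu>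
  for Q :: "'b measure" and \<Omega> :: "'a measure" and kern X S \<nu> +
  fixes P :: "'c measure" and Xs :: "nat \<Rightarrow> nat \<Rightarrow> 'c \<Rightarrow> 'a" and N T :: nat
  assumes replicas: "\<And>j. j \<in> {1..N} \<Longrightarrow> markov_chain P \<Omega> kern (Xs j)"
    and init: "\<And>j. j \<in> {1..N} \<Longrightarrow> distr P \<Omega> (Xs j 0) = \<nu>"
    and indep: "prob_space.indep_vars P (\<lambda>_. Pi\<^sub>M UNIV (\<lambda>_. \<Omega>)) (\<lambda>j \<omega> n. Xs j n \<omega>) {1..N}"
    and N: "1 \<le> N" and T: "1 \<le> T"
begin

abbreviation replica_exit :: "nat \<Rightarrow> 'c \<Rightarrow> enat"
  where "replica_exit j \<omega> \<equiv> exit_time S (\<lambda>n. Xs j n \<omega>)"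

definition accepted_event :: "'a set \<Rightarrow> nat \<Rightarrow> 'c set" where
  "accepted_event B t = {\<omega>\<in>space P. (\<exists>j\<in>{1..N}. replica_exit j \<omega> < \<infinity>) \<and>
     X_acc N T (\<lambda>j. replica_exit j \<omega>) (\<lambda>j n. Xs j n \<omega>) \<in> B \<and> T_acc N T (\<lambda>j. replica_exit j \<omega>) = t}"

sublocale P: prob_space P
  using markov_chainD(1)[OF replicas[of 1]] N by simp

lemma Xs_measurable: "j \<in> {1..N} \<Longrightarrow> Xs j n \<in> P \<rightarrow>\<^sub>M \<Omega>"
  using markov_chainD(3)[OF replicas] .

lemma measure_replica_path_cylinder:
  assumes "j \<in> {1..N}" and "\<And>i. A i \<in> sets \<Omega>"
  shows "measure P (path_cylinder P (Xs j) n A) = measure Q (path_cylinder Q X n A)"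
  using assms by (intro markov_chain_measure_path_cylinder_eq[OF replicas chain]) (simp_all add: init nu(4))

lemma AE_replica_exit_pos: "AE \<omega> in P. \<forall>j\<in>{1..N}. 0 < replica_exit j \<omega>"
proof (subst AE_finite_all)
  show "\<forall>j\<in>{1..N}. AE \<omega> in P. 0 < replica_exit j \<omega>"
  proof
    fix j assume j: "j \<in> {1..N}"
    have "AE x in distr P \<Omega> (Xs j 0). x \<in> S"
      unfolding init[OF j] by (rule AE_nu_in_S)
    then have "AE \<omega> in P. Xs j 0 \<omega> \<in> S"
      by (subst (asm) AE_distr_iff) (simp_all add: Xs_measurable[OF j])
    then show "AE \<omega> in P. 0 < replica_exit j \<omega>"
      by (simp add: zero_enat_def enat_less_exit_time_iff)
  qed
qed simp

text \<open>The guard \<open>j \<in> {1..N}\<close> is needed because nothing is assumed about \<open>Xs j\<close> for other \<open>j\<close>;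
  in this form the quantifiers over \<open>j\<close> are handled by the measurability prover.\<close>

lemma pred_replica_survives: "Measurable.pred P (\<lambda>\<omega>. j \<in> {1..N} \<longrightarrow> enat a < replica_exit j \<omega>)"
proof (cases "j \<in> {1..N}")
  case True
  have "path_cylinder P (Xs j) a (\<lambda>_. S) \<in> sets P"
    by (rule sets_path_cylinder[OF Xs_measurable[OF True]]) simp
  then have "Measurable.pred P (\<lambda>\<omega>. enat a < replica_exit j \<omega>)"
    unfolding path_cylinder_survival pred_def .
  with True show ?thesis
    by (simp only: simp_thms)
next
  case False
  then have "(\<lambda>\<omega>. j \<in> {1..N} \<longrightarrow> enat a < replica_exit j \<omega>) = (\<lambda>_. True)"
    by (intro ext) blast
  then show ?thesis
    by (simp only: pred_def Collect_mem_eq sets.top simp_thms)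
qed

lemma pred_poll_outcome:
  assumes B: "B \<in> sets \<Omega>"
  shows "Measurable.pred P (\<lambda>\<omega>. poll_outcome N T (\<lambda>j. replica_exit j \<omega>) m k s \<and> Xs k s \<omega> \<in> B)"
proof (cases "k \<in> {1..N}")
  case True
  have [measurable]: "Measurable.pred P (\<lambda>\<omega>. replica_exit k \<omega> = enat s \<and> Xs k s \<omega> \<in> B)"
  proof -
    have "path_cylinder P (Xs k) s (exit_pattern S B s) \<in> sets P"
      by (rule sets_path_cylinder[OF Xs_measurable[OF True]]) (simp add: sets_exit_pattern B)
    then show ?thesis
      unfolding path_cylinder_exit_pattern pred_def .
  qed
  note [measurable] = pred_replica_survives
  have "(\<lambda>\<omega>. poll_outcome N T (\<lambda>j. replica_exit j \<omega>) m k s \<and> Xs k s \<omega> \<in> B) =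
    (\<lambda>\<omega>. (1 \<le> m \<and> s \<le> m * T) \<and> (replica_exit k \<omega> = enat s \<and> Xs k s \<omega> \<in> B) \<and>
      (\<forall>j. j < k \<longrightarrow> (j \<in> {1..N} \<longrightarrow> enat (m * T) < replica_exit j \<omega>)) \<and>
      (2 \<le> m \<longrightarrow> (\<forall>j. j \<in> {1..N} \<longrightarrow> enat ((m - 1) * T) < replica_exit j \<omega>)))"
    unfolding poll_outcome_def using True by (intro ext) blast
  moreover have "Measurable.pred P (\<lambda>\<omega>. (1 \<le> m \<and> s \<le> m * T) \<and> (replica_exit k \<omega> = enat s \<and> Xs k s \<omega> \<in> B) \<and>
      (\<forall>j. j < k \<longrightarrow> (j \<in> {1..N} \<longrightarrow> enat (m * T) < replica_exit j \<omega>)) \<and>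
      (2 \<le> m \<longrightarrow> (\<forall>j. j \<in> {1..N} \<longrightarrow> enat ((m - 1) * T) < replica_exit j \<omega>)))"
    by measurable
  ultimately show ?thesis
    by (simp only:)
next
  case False
  then have "(\<lambda>\<omega>. poll_outcome N T (\<lambda>j. replica_exit j \<omega>) m k s \<and> Xs k s \<omega> \<in> B) = (\<lambda>_. False)"
    unfolding poll_outcome_def by blast
  then show ?thesis
    by (simp add: pred_def)
qed

lemma sets_accepted_event:
  assumes B: "B \<in> sets \<Omega>"
  shows "accepted_event B t \<in> sets P"
proof -
  have "accepted_event B t = (\<Union>m k s. {\<omega>\<in>space P. (poll_outcome N T (\<lambda>j. replica_exit j \<omega>) m k s \<and>
      Xs k s \<omega> \<in> B) \<and> (N - 1) * (m - 1) * T + (k - 1) * T + s = t})"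
    unfolding accepted_event_def accepted_iff_poll_outcome[OF T] by blast
  also have "\<dots> \<in> sets P"
    using pred_poll_outcome[OF B] by measurable
  finally show ?thesis .
qed

lemma AE_accepted_event_iff:
  assumes m: "1 \<le> m" and k: "k \<in> {1..N}" and r: "1 \<le> r" "r \<le> T"
  defines "d j \<equiv> if j < k then m * T else (m - 1) * T"
  shows "AE \<omega> in P. \<omega> \<in> accepted_event B (N * (m - 1) * T + (k - 1) * T + r) \<longleftrightarrow>
    \<omega> \<in> (\<Inter>j\<in>{1..N}. path_cylinder P (Xs j) (d j + (if j = k then r else 0))
                        (if j = k then exit_pattern S B (d j + r) else (\<lambda>_. S)))"
proof (rule AE_mp[OF AE_replica_exit_pos AE_I2], intro impI)
  fix \<omega> assume \<omega>: "\<omega> \<in> space P" and pos: "\<forall>j\<in>{1..N}. 0 < replica_exit j \<omega>"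
  have cylinder_iff: "\<omega> \<in> path_cylinder P (Xs j) (d j + (if j = k then r else 0))
      (if j = k then exit_pattern S B (d j + r) else (\<lambda>_. S)) \<longleftrightarrow>
    (if j = k then replica_exit j \<omega> = enat (d j + r) \<and> Xs j (d j + r) \<omega> \<in> B
     else enat (d j) < replica_exit j \<omega>)" for j
    using \<omega> by (cases "j = k") (simp_all add: path_cylinder_survival path_cylinder_exit_pattern)
  have "d k = (m - 1) * T"
    by (simp add: d_def)
  then show "\<omega> \<in> accepted_event B (N * (m - 1) * T + (k - 1) * T + r) \<longleftrightarrow>
    \<omega> \<in> (\<Inter>j\<in>{1..N}. path_cylinder P (Xs j) (d j + (if j = k then r else 0))
                        (if j = k then exit_pattern S B (d j + r) else (\<lambda>_. S)))"
    using \<omega> accepted_iff_replica_pattern[OF T pos m k r refl, of "\<lambda>j n. Xs j n \<omega>" B]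
    unfolding accepted_event_def INT_iff cylinder_iff by (simp add: d_def cong: if_cong)
qed

lemma measure_accepted_event_decomposed:
  assumes B: "B \<in> sets \<Omega>" and m: "1 \<le> m" and k: "k \<in> {1..N}" and r: "1 \<le> r" "r \<le> T"
  shows "measure P (accepted_event B (N * (m - 1) * T + (k - 1) * T + r))
    = exit_prob B (N * (m - 1) * T + (k - 1) * T + r)"
proof -
  define d where "d j = (if j < k then m * T else (m - 1) * T)" for j
  define c where "c j = d j + (if j = k then r else 0)" for j
  define A where "A j = (if j = k then exit_pattern S B (d j + r) else (\<lambda>_. S))" for j
  have A_sets: "A j i \<in> sets \<Omega>" for j i
    by (simp add: A_def sets_exit_pattern B)
  have "AE \<omega> in P. \<omega> \<in> accepted_event B (N * (m - 1) * T + (k - 1) * T + r) \<longleftrightarrow>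
      \<omega> \<in> (\<Inter>j\<in>{1..N}. path_cylinder P (Xs j) (c j) (A j))"
    using AE_accepted_event_iff[OF m k r, of B] by (simp only: c_def A_def d_def)
  moreover have "(\<Inter>j\<in>{1..N}. path_cylinder P (Xs j) (c j) (A j)) \<in> sets P"
    using N A_sets by (intro sets.finite_INT sets_path_cylinder[where \<Omega>=\<Omega>] Xs_measurable) auto
  ultimately have "measure P (accepted_event B (N * (m - 1) * T + (k - 1) * T + r))
      = measure P (\<Inter>j\<in>{1..N}. path_cylinder P (Xs j) (c j) (A j))"
    by (intro measure_eq_AE sets_accepted_event[OF B])
  also have "\<dots> = (\<Prod>j\<in>{1..N}. measure P (path_cylinder P (Xs j) (c j) (A j)))"
    using N by (intro P.indep_vars_measure_INT_path_cylinder[OF indep] Xs_measurable A_sets) auto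
  also have "\<dots> = (\<Prod>j\<in>{1..N}. if j = k then exit_prob B (d j + r) else survival (d j))"
  proof (rule prod.cong[OF refl])
    fix j assume "j \<in> {1..N}"
    from measure_replica_path_cylinder[where A="A j", OF this A_sets]
    show "measure P (path_cylinder P (Xs j) (c j) (A j))
        = (if j = k then exit_prob B (d j + r) else survival (d j))"
      by (simp add: c_def A_def)
  qed
  also have "\<dots> = exit_prob B ((\<Sum>j\<in>{1..N}. d j) + r)"
    using k r by (intro prod_survival_exit_prob B) auto
  also have "(\<Sum>j\<in>{1..N}. d j) = N * (m - 1) * T + (k - 1) * T"
    unfolding d_def using m k by (rule sum_poll_offsets)
  finally show ?thesis .
qed

lemma measure_accepted_event_0:
  assumes B: "B \<in> sets \<Omega>"
  shows "measure P (accepted_event B 0) = 0"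
proof -
  have "AE \<omega> in P. \<omega> \<in> accepted_event B 0 \<longleftrightarrow> \<omega> \<in> {}"
  proof (rule AE_mp[OF AE_replica_exit_pos AE_I2], intro impI)
    fix \<omega> assume pos: "\<forall>j\<in>{1..N}. 0 < replica_exit j \<omega>"
    have "\<omega> \<notin> accepted_event B 0"
    proof
      assume "\<omega> \<in> accepted_event B 0"
      then have "\<exists>m k s. poll_outcome N T (\<lambda>j. replica_exit j \<omega>) m k s \<and> Xs k s \<omega> \<in> B \<and>
          (N - 1) * (m - 1) * T + (k - 1) * T + s = 0"
        unfolding accepted_event_def accepted_iff_poll_outcome[OF T] by (simp only: mem_Collect_eq)
      then obtain m k s where "poll_outcome N T (\<lambda>j. replica_exit j \<omega>) m k s \<and> Xs k s \<omega> \<in> B \<and>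
          (N - 1) * (m - 1) * T + (k - 1) * T + s = 0"
        by (elim exE)
      then have "replica_exit k \<omega> = 0" and "k \<in> {1..N}"
        by (simp_all add: poll_outcome_def zero_enat_def)
      with pos show False
        by auto
    qed
    then show "\<omega> \<in> accepted_event B 0 \<longleftrightarrow> \<omega> \<in> {}"
      by simp
  qed
  from measure_eq_AE[OF this sets_accepted_event[OF B] sets.empty_sets] show ?thesis
    by simp
qed

lemma measure_accepted_event:
  assumes B: "B \<in> sets \<Omega>"
  shows "measure P (accepted_event B t) = exit_prob B t"
proof (cases "t = 0")
  case False
  then have "1 \<le> t"
    by simp
  then obtain m k r where "1 \<le> m" "k \<in> {1..N}" "1 \<le> r" "r \<le> T"
    and "t = N * (m - 1) * T + (k - 1) * T + r"
    by (rule polling_time_decompose[OF N T])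
  then show ?thesis
    using measure_accepted_event_decomposed[OF B] by simp
qed (simp add: measure_accepted_event_0 B exit_prob_0[OF B])

end

theorem proposition1:
  fixes \<Omega> :: "'a measure" and kern :: "'a \<Rightarrow> 'a measure" and S :: "'a set"
    and \<nu> :: "'a measure"
    and Q :: "'b measure" and X :: "nat \<Rightarrow> 'b \<Rightarrow> 'a"
    and P :: "'c measure" and Xs :: "nat \<Rightarrow> nat \<Rightarrow> 'c \<Rightarrow> 'a"
    and N Tpoll :: nat
  assumes S: "S \<in> sets \<Omega>"
    and chain: "markov_chain Q \<Omega> kern X"
    and qsd: "qsd Q \<Omega> X S \<nu>"
    and N: "N \<ge> 1" and Tpoll: "Tpoll \<ge> 1"
    and replicas: "\<And>j. j \<in> {1..N} \<Longrightarrow> markov_chain P \<Omega> kern (Xs j)"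
    and init: "\<And>j. j \<in> {1..N} \<Longrightarrow> distr P \<Omega> (Xs j 0) = \<nu>"
    and indep: "prob_space.indep_vars P (\<lambda>_. Pi\<^sub>M UNIV (\<lambda>_. \<Omega>))
                  (\<lambda>j \<omega>. \<lambda>n. Xs j n \<omega>) {1..N}"
  shows "\<forall>B t. B \<in> sets \<Omega> \<longrightarrow>
    measure P {\<omega>\<in>space P.
        (\<exists>j\<in>{1..N}. exit_time S (\<lambda>n. Xs j n \<omega>) < \<infinity>) \<and>
        X_acc N Tpoll (\<lambda>j. exit_time S (\<lambda>n. Xs j n \<omega>)) (\<lambda>j n. Xs j n \<omega>) \<in> B \<and>
        T_acc N Tpoll (\<lambda>j. exit_time S (\<lambda>n. Xs j n \<omega>)) = t}
    = measure Q {\<omega>\<in>space Q. exit_time S (\<lambda>n. X n \<omega>) = enat t \<and> X t \<omega> \<in> B}"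
proof (intro allI impI)
  fix B t assume B: "B \<in> sets \<Omega>"
  interpret qsd_replicas Q \<Omega> kern X S \<nu> P Xs N Tpoll
    using chain qsd replicas init indep N Tpoll by unfold_locales
  have "{\<omega>\<in>space Q. exit_time S (\<lambda>n. X n \<omega>) = enat t \<and> X t \<omega> \<in> B} = path_cylinder Q X t (exit_pattern S B t)"
    by (simp add: path_cylinder_exit_pattern)
  with measure_accepted_event[OF B, of t] show "measure P {\<omega>\<in>space P.
        (\<exists>j\<in>{1..N}. exit_time S (\<lambda>n. Xs j n \<omega>) < \<infinity>) \<and>
        X_acc N Tpoll (\<lambda>j. exit_time S (\<lambda>n. Xs j n \<omega>)) (\<lambda>j n. Xs j n \<omega>) \<in> B \<and>
        T_acc N Tpoll (\<lambda>j. exit_time S (\<lambda>n. Xs j n \<omega>)) = t}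
    = measure Q {\<omega>\<in>space Q. exit_time S (\<lambda>n. X n \<omega>) = enat t \<and> X t \<omega> \<in> B}"
    by (simp add: accepted_event_def)
qed

end
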